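(* Let $\mu$ be the Cauchy distribution $d\mu(x)=\frac1\pi\frac{dx}{1+x^2}$ and $t>0$. Then \[\varphi_t(u)=\frac{4t}{\sqrt{u^2+1}\,\big(\sqrt{u^2+1}+\sqrt{u^2+1+4t}\big)},\qquad u\in\mathbb R.\]
   Context: $v_t(u)=\inf\{v>0:\int\frac{d\mu(x)}{(u-x)^2+v^2}\le\frac1t\}$; $H_{-t}(z)=z-t\int\frac{d\mu(x)}{z-x}$; $f_t(u_0)=\mathrm{Re}[H_{-t}(u_0+iv_t(u_0))]$, a strictly increasing homeomorphism of $\mathbb R$; $\varphi_t(u)=2v_t(f_t^{-1}(u))$. *)

theory Defs
  imports "HOL-Probability.Probability"
begin

definition cauchy_measure :: "real measure" where
  "cauchy_measure = density lborel (\<lambda>x. ennreal (1 / (pi * (1 + x\<^sup>2))))"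

definition v_t :: "real measure \<Rightarrow> real \<Rightarrow> real \<Rightarrow> real" where
  "v_t \<mu> t u = Inf {v. v > 0 \<and> (\<integral>x. 1 / ((u - x)\<^sup>2 + v\<^sup>2) \<partial>\<mu>) \<le> 1 / t}"

definition H_minus :: "real measure \<Rightarrow> real \<Rightarrow> complex \<Rightarrow> complex" where
  "H_minus \<mu> t z = z - of_real t * (\<integral>x. 1 / (z - of_real x) \<partial>\<mu>)"

definition f_t :: "real measure \<Rightarrow> real \<Rightarrow> real \<Rightarrow> real" where
  "f_t \<mu> t u0 = Re (H_minus \<mu> t (Complex u0 (v_t \<mu> t u0)))"

definition phi_t :: "real measure \<Rightarrow> real \<Rightarrow> real \<Rightarrow> real" where
  "phi_t \<mu> t u = 2 * v_t \<mu> t (inv (f_t \<mu> t) u)"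

end

theory Submission
  imports Defs "HOL-Real_Asymp.Real_Asymp"
begin

text \<open>
  The Cauchy transform of the Cauchy distribution is \<open>G(z) = 1 / (z + \<i>)\<close> on the upper
  half plane; it is computed by partial fractions and the fundamental theorem of calculus on
  the whole line. Its imaginary part gives
  \<open>\<integral> d\<mu>(y) / ((x - y)\<^sup>2 + v\<^sup>2) = (1 + v) / (v (x\<^sup>2 + (1 + v)\<^sup>2))\<close>,
  which is strictly decreasing in \<open>v\<close>, so \<open>v\<^sub>t(x)\<close> is the unique \<open>w > 0\<close>
  with \<open>w (x\<^sup>2 + (1 + w)\<^sup>2) = t (1 + w)\<close>; its real part gives
  \<open>f\<^sub>t(x) = x / (1 + v\<^sub>t(x))\<close>. Hence the preimage of \<open>u\<close> under \<open>f\<^sub>t\<close> is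
  \<open>x = u (1 + w)\<close>, where \<open>w > 0\<close> solves the quadratic \<open>w (1 + w) (u\<^sup>2 + 1) = t\<close>,
  and \<open>\<phi>\<^sub>t(u) = 2 w\<close>.
\<close>

lemma one_plus_square_pos: "0 < 1 + x\<^sup>2" for x :: real
  by (simp add: add_pos_nonneg)

lemma one_plus_square_of_real_nonzero: "1 + (of_real x)\<^sup>2 \<noteq> (0::complex)"
proof -
  have "complex_of_real (1 + x\<^sup>2) \<noteq> 0"
    using one_plus_square_pos[of x] by (simp only: of_real_eq_0_iff)
  then show ?thesis
    by simp
qed

lemma complex_one_plus_square_eq: "1 + y\<^sup>2 = (y - \<i>) * (y + \<i>)" for y :: complex
  by (simp add: algebra_simps power2_eq_square)

lemma LBINT_whole_line: "(LBINT x=-\<infinity>..\<infinity>. f x) = (\<integral>x. f x \<partial>lborel)"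
  by (simp add: interval_lebesgue_integral_def set_lebesgue_integral_def)

lemma one_div_sub_of_real:
  fixes z :: complex and x :: real
  assumes "Im z \<noteq> 0"
  shows "1 / (z - of_real x)
    = (of_real (Re z - x) - \<i> * of_real (Im z)) / of_real ((x - Re z)\<^sup>2 + (Im z)\<^sup>2)"
proof -
  define D where "D = (x - Re z)\<^sup>2 + (Im z)\<^sup>2"
  have "(z - of_real x) * (of_real (Re z - x) - \<i> * of_real (Im z)) = of_real D"
    by (simp add: D_def complex_eq_iff power2_eq_square algebra_simps)
  moreover have "D \<noteq> 0" using assms by (simp add: D_def add_nonneg_pos)
  moreover have "z - of_real x \<noteq> 0" using assms by (auto simp: complex_eq_iff)
  ultimately show ?thesis
    unfolding D_def[symmetric] by (simp add: field_simps)
qed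

text \<open>A real-variable form of \<open>a (log (1 + x\<^sup>2) / 2 - log (x - z)) + b arctan x\<close>:
  the imaginary part of \<open>log (x - z)\<close> is written through \<open>arctan\<close>, avoiding branch cuts.\<close>

definition partial_fraction_primitive ::
    "complex \<Rightarrow> complex \<Rightarrow> complex \<Rightarrow> real \<Rightarrow> complex" where
  "partial_fraction_primitive a b z x =
     a * of_real (ln (1 + x\<^sup>2) / 2 - ln ((x - Re z)\<^sup>2 + (Im z)\<^sup>2) / 2)
     - \<i> * a * of_real (arctan ((x - Re z) / Im z)) + b * of_real (arctan x)"

lemma has_vector_derivative_partial_fraction_primitive:
  fixes a b z :: complex and x :: real
  assumes "Im z > 0"
  shows "(partial_fraction_primitive a b z
          has_vector_derivative ((a * of_real x + b) / (1 + (of_real x)\<^sup>2) + a / (z - of_real x))) (at x)"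
proof -
  define D where "D = (x - Re z)\<^sup>2 + (Im z)\<^sup>2"
  have D: "D > 0" using assms by (simp add: D_def add_nonneg_pos)
  have "((\<lambda>x. ln (1 + x\<^sup>2) / 2 - ln ((x - Re z)\<^sup>2 + (Im z)\<^sup>2) / 2)
          has_real_derivative (x / (1 + x\<^sup>2) - (x - Re z) / D)) (at x)"
    using D one_plus_square_pos[of x]
    by (auto intro!: derivative_eq_intros simp: D_def field_simps)
  moreover have "((\<lambda>x. arctan ((x - Re z) / Im z)) has_real_derivative (Im z / D)) (at x)"
    using D assms by (auto intro!: derivative_eq_intros simp: D_def field_simps power2_eq_square)
  moreover have "(arctan has_real_derivative (1 / (1 + x\<^sup>2))) (at x)"
    by (auto intro!: derivative_eq_intros simp: divide_inverse)
  ultimately have "(partial_fraction_primitive a b z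
          has_vector_derivative (a * of_real (x / (1 + x\<^sup>2) - (x - Re z) / D)
              - \<i> * a * of_real (Im z / D) + b * of_real (1 / (1 + x\<^sup>2)))) (at x)"
    unfolding partial_fraction_primitive_def[abs_def]
    by (intro has_vector_derivative_add has_vector_derivative_diff has_vector_derivative_mult_right
        has_vector_derivative_of_real)
  also have "a * of_real (x / (1 + x\<^sup>2) - (x - Re z) / D) - \<i> * a * of_real (Im z / D)
      + b * of_real (1 / (1 + x\<^sup>2)) = (a * of_real x + b) / (1 + (of_real x)\<^sup>2) + a / (z - of_real x)"
  proof -
    have "a / (z - x) = a * ((of_real (Re z - x) - \<i> * of_real (Im z)) / of_real D)"
      using assms by (subst one_div_sub_of_real[of z x, folded D_def, symmetric]) simp_all
    then show ?thesis
      by (simp add: algebra_simps add_divide_distrib diff_divide_distrib)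
  qed
  finally show ?thesis .
qed

lemma tendsto_partial_fraction_primitive:
  fixes a b z :: complex
  assumes "Im z > 0"
  shows "(partial_fraction_primitive a b z \<longlongrightarrow> (b - \<i> * a) * of_real (pi / 2)) at_top"
    and "(partial_fraction_primitive a b z \<longlongrightarrow> - (b - \<i> * a) * of_real (pi / 2)) at_bot"
proof -
  have "((\<lambda>x. ln (1 + x\<^sup>2) / 2 - ln ((x - u)\<^sup>2 + v\<^sup>2) / 2) \<longlongrightarrow> 0) at_top"
       "((\<lambda>x. ln (1 + x\<^sup>2) / 2 - ln ((x - u)\<^sup>2 + v\<^sup>2) / 2) \<longlongrightarrow> 0) at_bot"
       "((\<lambda>x. arctan ((x - u) / v)) \<longlongrightarrow> pi / 2) at_top"
       "((\<lambda>x. arctan ((x - u) / v)) \<longlongrightarrow> - (pi / 2)) at_bot"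
    if "v > 0" for u v :: real
    using that by real_asymp+
  note lim = this[OF assms]
  have "(partial_fraction_primitive a b z
      \<longlongrightarrow> a * of_real 0 - \<i> * a * of_real (pi / 2) + b * of_real (pi / 2)) at_top"
    unfolding partial_fraction_primitive_def[abs_def] by (intro lim tendsto_arctan_at_top tendsto_intros)
  then show "(partial_fraction_primitive a b z \<longlongrightarrow> (b - \<i> * a) * of_real (pi / 2)) at_top"
    by (simp add: field_simps)
  have "(partial_fraction_primitive a b z
      \<longlongrightarrow> a * of_real 0 - \<i> * a * of_real (- (pi / 2)) + b * of_real (- (pi / 2))) at_bot"
    unfolding partial_fraction_primitive_def[abs_def] by (intro lim tendsto_arctan_at_bot tendsto_intros)
  then show "(partial_fraction_primitive a b z \<longlongrightarrow> - (b - \<i> * a) * of_real (pi / 2)) at_bot"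
    by (simp add: field_simps)
qed

lemma lborel_integral_partial_fraction:
  fixes a b z :: complex
  assumes z: "Im z > 0"
    and integrable:
      "integrable lborel (\<lambda>x. (a * of_real x + b) / (1 + (of_real x)\<^sup>2) + a / (z - of_real x))"
  shows "(\<integral>x. (a * of_real x + b) / (1 + (of_real x)\<^sup>2) + a / (z - of_real x) \<partial>lborel)
    = of_real pi * (b - \<i> * a)"
proof -
  have "isCont (\<lambda>x. (a * of_real x + b) / (1 + (of_real x)\<^sup>2) + a / (z - of_real x)) x" for x :: real
    using z one_plus_square_of_real_nonzero[of x] by (intro continuous_intros) (auto simp: complex_eq_iff)
  from interval_integral_FTC_integrable
      [where F = "partial_fraction_primitive a b z" and a = "-\<infinity>" and b = \<infinity>, OF _ _ this]
  have "(LBINT x=-\<infinity>..\<infinity>. (a * of_real x + b) / (1 + (of_real x)\<^sup>2) + a / (z - of_real x))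
          = (b - \<i> * a) * of_real (pi / 2) - (- (b - \<i> * a) * of_real (pi / 2))"
    using has_vector_derivative_partial_fraction_primitive[OF z] tendsto_partial_fraction_primitive[OF z] integrable
    by (simp add: ereal_tendsto_simps1 set_integrable_def)
  also have "\<dots> = of_real pi * (b - \<i> * a)"
    by (simp add: field_simps)
  finally show ?thesis by (simp add: LBINT_whole_line)
qed

lemma lborel_integral_inverse_square:
  fixes w :: complex
  assumes w: "Im w \<noteq> 0" and integrable: "integrable lborel (\<lambda>x. 1 / (of_real x - w)\<^sup>2)"
  shows "(\<integral>x. 1 / (of_real x - w)\<^sup>2 \<partial>lborel) = 0"
proof -
  define F where "F = (\<lambda>x::real. - 1 / (of_real x - w))"
  have nz: "of_real x - w \<noteq> 0" for x :: real
    using w by (auto simp: complex_eq_iff)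
  have "(F has_vector_derivative 1 / (of_real x - w)\<^sup>2) (at x)" for x
    unfolding F_def using nz[of x]
    by (intro has_vector_derivative_real_field[where f = "\<lambda>\<zeta>. - 1 / (\<zeta> - w)"])
      (auto intro!: derivative_eq_intros simp: power2_eq_square)
  moreover have "isCont (\<lambda>x. 1 / (of_real x - w)\<^sup>2) x" for x :: real
    using nz[of x] by (intro continuous_intros) auto
  moreover have "filterlim (\<lambda>x::real. of_real x - w) at_infinity at_infinity"
    unfolding diff_conv_add_uminus using filterlim_norm_at_top[where 'a = real]
    by (intro tendsto_add_filterlim_at_infinity'[OF _ tendsto_const])
      (simp add: filterlim_at_infinity_conv_norm_at_top real_norm_def[abs_def])
  then have "(F \<longlongrightarrow> 0) at_infinity"
    unfolding F_def by (intro tendsto_divide_0[OF tendsto_const])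
  then have "(F \<longlongrightarrow> 0) at_top" "(F \<longlongrightarrow> 0) at_bot"
    by (auto intro: tendsto_mono at_top_le_at_infinity at_bot_le_at_infinity)
  ultimately have "(LBINT x=-\<infinity>..\<infinity>. 1 / (of_real x - w)\<^sup>2) = 0 - 0"
    using interval_integral_FTC_integrable[where F = F and a = "-\<infinity>" and b = \<infinity>] integrable
    by (simp add: ereal_tendsto_simps1 set_integrable_def)
  then show ?thesis by (simp add: LBINT_whole_line)
qed

lemma field_partial_fraction:
  fixes P Q R S :: "'a::field"
  assumes "P \<noteq> 0" "Q \<noteq> 0" "S \<noteq> 0" "R * Q + P = S"
  shows "1 / (P * Q) = (R / P + 1 / Q) / S"
  using assms by (simp add: field_simps)

lemma field_double_pole_fraction:
  fixes P Q c :: "'a::field"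
  assumes "P \<noteq> 0" "Q \<noteq> 0" "c * (Q\<^sup>2 - P) = Q"
  shows "1 / (P * Q) = c * (1 / P - 1 / Q\<^sup>2)"
proof -
  have "c * (1 / P - 1 / Q\<^sup>2) = c * (Q\<^sup>2 - P) / (P * Q\<^sup>2)"
    using assms by (simp add: field_simps)
  also have "\<dots> = 1 / (P * Q)"
    using assms by (simp add: power2_eq_square)
  finally show ?thesis ..
qed

lemma cauchy_kernel_partial_fractions:
  fixes y z :: complex
  assumes "y \<noteq> z" "1 + y\<^sup>2 \<noteq> 0" "1 + z\<^sup>2 \<noteq> 0"
  shows "1 / ((1 + y\<^sup>2) * (z - y)) = ((y + z) / (1 + y\<^sup>2) + 1 / (z - y)) / (1 + z\<^sup>2)"
  using assms by (intro field_partial_fraction) (auto simp: algebra_simps power2_eq_square)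

lemma cauchy_kernel_at_i:
  fixes y :: complex
  assumes "1 + y\<^sup>2 \<noteq> 0"
  shows "1 / ((1 + y\<^sup>2) * (\<i> - y)) = - \<i> / 2 * (1 / (1 + y\<^sup>2) - 1 / (y - \<i>)\<^sup>2)"
proof -
  have "\<i> - y \<noteq> 0"
    using assms by (auto simp: complex_one_plus_square_eq)
  moreover have "- \<i> / 2 * ((\<i> - y)\<^sup>2 - (1 + y\<^sup>2)) = \<i> - y"
    by (simp add: algebra_simps power2_eq_square)
  ultimately show ?thesis
    using assms field_double_pole_fraction by (metis power2_commute)
qed

lemma integrable_cauchy_kernel:
  fixes z :: complex
  assumes z: "Im z > 0"
  shows "integrable lborel (\<lambda>x. 1 / ((1 + (of_real x)\<^sup>2) * (z - of_real x)))"
proof (rule Bochner_Integration.integrable_bound)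
  show "integrable lborel (\<lambda>x. inverse (Im z) * inverse (1 + x\<^sup>2))"
    using integrable_inverse_1_plus_square by (simp add: set_integrable_def)
  show "AE x in lborel. norm (1 / ((1 + (of_real x)\<^sup>2) * (z - of_real x)))
      \<le> norm (inverse (Im z) * inverse (1 + x\<^sup>2))"
  proof (rule AE_I2)
    fix x :: real
    have "1 + (of_real x)\<^sup>2 = complex_of_real (1 + x\<^sup>2)"
      by simp
    then have "norm (1 / ((1 + (of_real x)\<^sup>2) * (z - of_real x)))
        = inverse (1 + x\<^sup>2) * inverse (cmod (z - of_real x))"
      using one_plus_square_pos[of x]
      by (simp add: norm_divide norm_mult norm_inverse divide_inverse abs_of_pos del: of_real_add of_real_power)
    also have "\<dots> \<le> inverse (1 + x\<^sup>2) * inverse (Im z)"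
      using abs_Im_le_cmod[of "z - of_real x"] z one_plus_square_pos[of x]
      by (intro mult_left_mono le_imp_inverse_le) auto
    finally show "norm (1 / ((1 + (of_real x)\<^sup>2) * (z - of_real x)))
        \<le> norm (inverse (Im z) * inverse (1 + x\<^sup>2))"
      using z by (simp add: abs_mult mult.commute)
  qed
qed measurable

lemma lborel_integral_cauchy_kernel_at_i:
  "(\<integral>x. 1 / ((1 + (of_real x)\<^sup>2) * (\<i> - of_real x)) \<partial>lborel) = - \<i> / 2 * of_real pi"
proof -
  define A where "A = (\<lambda>x::real. 1 / (1 + (of_real x)\<^sup>2) :: complex)"
  define B where "B = (\<lambda>x::real. 1 / (of_real x - \<i>)\<^sup>2)"
  have kernel: "1 / ((1 + (of_real x)\<^sup>2) * (\<i> - of_real x)) = - \<i> / 2 * (A x - B x)" for x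
    unfolding A_def B_def using one_plus_square_of_real_nonzero by (rule cauchy_kernel_at_i)
  have A_of_real: "A = (\<lambda>x. of_real (inverse (1 + x\<^sup>2)))"
    by (simp add: A_def divide_inverse)
  have A: "integrable lborel A"
    using integrable_inverse_1_plus_square unfolding A_of_real set_integrable_def
    by (intro integrable_of_real) simp
  have "(\<integral>x. A x \<partial>lborel) = of_real pi"
    using LBINT_inverse_1_plus_square unfolding A_of_real integral_complex_of_real
    by (simp add: LBINT_whole_line)
  moreover have B: "integrable lborel B"
  proof -
    have "B = (\<lambda>x. A x - 2 * \<i> * (1 / ((1 + (of_real x)\<^sup>2) * (\<i> - of_real x))))"
      unfolding kernel by (simp add: field_simps)
    then show ?thesis
      by (simp only:) (intro Bochner_Integration.integrable_diff integrable_mult_right A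
        integrable_cauchy_kernel, simp)
  qed
  moreover have "(\<integral>x. B x \<partial>lborel) = 0"
    using B unfolding B_def by (rule lborel_integral_inverse_square[rotated]) simp
  ultimately show ?thesis
    by (simp only: kernel integral_mult_right_zero Bochner_Integration.integral_diff[OF A B]) simp
qed

lemma lborel_integral_cauchy_kernel:
  fixes z :: complex
  assumes z: "Im z > 0"
  shows "(\<integral>x. 1 / ((1 + (of_real x)\<^sup>2) * (z - of_real x)) \<partial>lborel) = of_real pi / (z + \<i>)"
proof (cases "z = \<i>")
  \<comment> \<open>at \<open>z = \<i>\<close> the poles of the kernel collide and the partial fractions degenerate\<close>
  case True
  then show ?thesis
    using lborel_integral_cauchy_kernel_at_i by (simp add: field_simps)
next
  case False
  have "z + \<i> \<noteq> 0"
    using z by (auto simp: complex_eq_iff)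
  then have "1 + z\<^sup>2 \<noteq> 0"
    using False by (simp add: complex_one_plus_square_eq)
  then have kernel: "1 / ((1 + (of_real x)\<^sup>2) * (z - of_real x))
      = ((of_real x + z) / (1 + (of_real x)\<^sup>2) + 1 / (z - of_real x)) / (1 + z\<^sup>2)" for x
    using z one_plus_square_of_real_nonzero
    by (intro cauchy_kernel_partial_fractions) (auto simp: complex_eq_iff)
  have "(\<lambda>x. (of_real x + z) / (1 + (of_real x)\<^sup>2) + 1 / (z - of_real x))
      = (\<lambda>x. (1 + z\<^sup>2) * (1 / ((1 + (of_real x)\<^sup>2) * (z - of_real x))))"
    unfolding kernel using \<open>1 + z\<^sup>2 \<noteq> 0\<close> by simp
  then have "integrable lborel (\<lambda>x. (of_real x + z) / (1 + (of_real x)\<^sup>2) + 1 / (z - of_real x))"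
    by (simp only:) (rule integrable_mult_right[OF integrable_cauchy_kernel[OF z]])
  then have "(\<integral>x. (of_real x + z) / (1 + (of_real x)\<^sup>2) + 1 / (z - of_real x) \<partial>lborel)
      = of_real pi * (z - \<i>)"
    using lborel_integral_partial_fraction[OF z, of 1 z] by simp
  then show ?thesis
    using False \<open>z + \<i> \<noteq> 0\<close> unfolding kernel integral_divide_zero
    by (simp add: complex_one_plus_square_eq)
qed

lemma cauchy_transform_cauchy_measure:
  fixes z :: complex
  assumes z: "Im z > 0"
  shows "integrable cauchy_measure (\<lambda>x. 1 / (z - of_real x))"
    and "(\<integral>x. 1 / (z - of_real x) \<partial>cauchy_measure) = 1 / (z + \<i>)"
proof -
  have density: "(1 / (pi * (1 + x\<^sup>2))) *\<^sub>R (1 / (z - of_real x))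
      = 1 / of_real pi * (1 / ((1 + (of_real x)\<^sup>2) * (z - of_real x)))" for x :: real
    by (simp add: scaleR_conv_of_real)
  have [measurable]: "(\<lambda>x. 1 / (z - of_real x)) \<in> borel_measurable lborel"
    by measurable
  have "integrable lborel (\<lambda>x. (1 / (pi * (1 + x\<^sup>2))) *\<^sub>R (1 / (z - of_real x)))"
    unfolding density by (intro integrable_mult_right integrable_cauchy_kernel[OF z])
  then show "integrable cauchy_measure (\<lambda>x. 1 / (z - of_real x))"
    unfolding cauchy_measure_def by (subst integrable_density) (auto simp: add_pos_nonneg)
  have "(\<integral>x. 1 / (z - of_real x) \<partial>cauchy_measure)
      = (\<integral>x. (1 / (pi * (1 + x\<^sup>2))) *\<^sub>R (1 / (z - of_real x)) \<partial>lborel)"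
    unfolding cauchy_measure_def by (rule integral_density) (auto simp: add_pos_nonneg)
  also have "\<dots>
      = 1 / of_real pi * (\<integral>x. 1 / ((1 + (of_real x)\<^sup>2) * (z - of_real x)) \<partial>lborel)"
    unfolding density by (rule integral_mult_right_zero)
  also have "\<dots> = 1 / (z + \<i>)"
    by (simp add: lborel_integral_cauchy_kernel[OF z])
  finally show "(\<integral>x. 1 / (z - of_real x) \<partial>cauchy_measure) = 1 / (z + \<i>)" .
qed

definition cauchy_poisson_reciprocal :: "real \<Rightarrow> real \<Rightarrow> real" where
  "cauchy_poisson_reciprocal x v = v * (x\<^sup>2 + (1 + v)\<^sup>2) / (1 + v)"

lemma cauchy_measure_poisson_integral:
  fixes x v :: real
  assumes v: "v > 0"
  shows "(\<integral>y. 1 / ((x - y)\<^sup>2 + v\<^sup>2) \<partial>cauchy_measure) = 1 / cauchy_poisson_reciprocal x v"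
proof -
  have kernel: "1 / ((x - y)\<^sup>2 + v\<^sup>2) = - Im (1 / (Complex x v - of_real y)) / v" for y :: real
    using v by (simp add: Im_divide cmod_power2 power2_commute[of x] add_nonneg_pos)
  have "(\<integral>y. 1 / ((x - y)\<^sup>2 + v\<^sup>2) \<partial>cauchy_measure)
      = - (\<integral>y. Im (1 / (Complex x v - of_real y)) \<partial>cauchy_measure) / v"
    unfolding kernel by simp
  also have "\<dots> = - Im (1 / (Complex x v + \<i>)) / v"
    using cauchy_transform_cauchy_measure[of "Complex x v"] v by simp
  also have "\<dots> = 1 / cauchy_poisson_reciprocal x v"
    using v by (simp add: cauchy_poisson_reciprocal_def Im_divide cmod_power2 field_simps minus_divide_left)
  finally show ?thesis .
qed

lemma strict_mono_on_cauchy_poisson_reciprocal: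
  "strict_mono_on {0<..} (cauchy_poisson_reciprocal x)"
proof (rule strict_mono_onI)
  have split: "cauchy_poisson_reciprocal x r = x\<^sup>2 * (r / (1 + r)) + r * (1 + r)" if "r > 0" for r
    using that by (simp add: cauchy_poisson_reciprocal_def field_simps) (simp add: power2_eq_square algebra_simps)
  fix v w :: real
  assume v: "v \<in> {0<..}" and w: "w \<in> {0<..}" and "v < w"
  then have "v / (1 + v) \<le> w / (1 + w)"
    by (simp add: field_simps)
  then have "x\<^sup>2 * (v / (1 + v)) \<le> x\<^sup>2 * (w / (1 + w))"
    by (rule mult_left_mono) (rule zero_le_power2)
  moreover have "v * (1 + v) < w * (1 + w)"
    using v \<open>v < w\<close> by (intro mult_strict_mono) auto
  ultimately show "cauchy_poisson_reciprocal x v < cauchy_poisson_reciprocal x w"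
    using v w by (simp add: split add_le_less_mono)
qed

lemma v_t_cauchy_measure_eq:
  assumes t: "t > 0" and w: "w > 0" and level: "cauchy_poisson_reciprocal x w = t"
  shows "v_t cauchy_measure t x = w"
proof -
  have "v \<in> {v. v > 0 \<and> (\<integral>y. 1 / ((x - y)\<^sup>2 + v\<^sup>2) \<partial>cauchy_measure) \<le> 1 / t}
      \<longleftrightarrow> w \<le> v" for v :: real
  proof (cases "v > 0")
    case True
    then have "cauchy_poisson_reciprocal x v > 0"
      by (simp add: cauchy_poisson_reciprocal_def add_nonneg_pos)
    then have "(\<integral>y. 1 / ((x - y)\<^sup>2 + v\<^sup>2) \<partial>cauchy_measure) \<le> 1 / t
        \<longleftrightarrow> cauchy_poisson_reciprocal x w \<le> cauchy_poisson_reciprocal x v"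
      using t True by (simp add: cauchy_measure_poisson_integral level divide_simps)
    also have "\<dots> \<longleftrightarrow> w \<le> v"
      using w True by (intro strict_mono_on_less_eq[OF strict_mono_on_cauchy_poisson_reciprocal]) auto
    finally show ?thesis
      using True by simp
  qed (use w in auto)
  then have "{v. v > 0 \<and> (\<integral>y. 1 / ((x - y)\<^sup>2 + v\<^sup>2) \<partial>cauchy_measure) \<le> 1 / t} = {w..}"
    by auto
  then show ?thesis
    by (simp add: v_t_def)
qed

lemma v_t_cauchy_measure_iff:
  assumes t: "t > 0"
  shows "v_t cauchy_measure t x = w \<longleftrightarrow> w > 0 \<and> cauchy_poisson_reciprocal x w = t"
proof -
  have "continuous_on {0..t} (cauchy_poisson_reciprocal x)"
    unfolding cauchy_poisson_reciprocal_def by (intro continuous_intros) auto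
  moreover have "t \<le> cauchy_poisson_reciprocal x t"
    using t by (simp add: cauchy_poisson_reciprocal_def field_simps power2_eq_square)
  ultimately obtain w' where "0 \<le> w'" "w' \<le> t" "cauchy_poisson_reciprocal x w' = t"
    using IVT'[of "cauchy_poisson_reciprocal x" 0 t t] t by (auto simp: cauchy_poisson_reciprocal_def)
  moreover from this have "w' \<noteq> 0"
    using t by (auto simp: cauchy_poisson_reciprocal_def)
  ultimately have w': "w' > 0" "cauchy_poisson_reciprocal x w' = t"
    by auto
  have "w = w' \<longleftrightarrow> w > 0 \<and> cauchy_poisson_reciprocal x w = t"
    using w' strict_mono_on_eqD[OF strict_mono_on_cauchy_poisson_reciprocal, of x w' w] by auto
  then show ?thesis
    using v_t_cauchy_measure_eq[OF t w'] by auto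
qed

lemma f_t_cauchy_measure:
  assumes t: "t > 0"
  shows "f_t cauchy_measure t x = x / (1 + v_t cauchy_measure t x)"
proof -
  define w where "w = v_t cauchy_measure t x"
  have w: "w > 0" and level: "cauchy_poisson_reciprocal x w = t"
    using v_t_cauchy_measure_iff[OF t] w_def by auto
  have "Complex x w + \<i> = Complex x (1 + w)"
    by (simp add: complex_eq_iff)
  then have "f_t cauchy_measure t x = x - t * (x / (x\<^sup>2 + (1 + w)\<^sup>2))"
    using cauchy_transform_cauchy_measure(2)[of "Complex x w"] w
    by (simp add: f_t_def H_minus_def w_def[symmetric] Re_divide cmod_power2)
  also have "\<dots> = x - w * x / (1 + w)"
  proof -
    have "x\<^sup>2 + (1 + w)\<^sup>2 \<noteq> 0" "1 + w \<noteq> 0"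
      using w by (auto simp: add_nonneg_pos)
    then show ?thesis
      by (simp add: level[symmetric] cauchy_poisson_reciprocal_def)
  qed
  also have "\<dots> = x / (1 + w)"
    using w by (simp add: field_simps)
  finally show ?thesis
    by (simp add: w_def)
qed

lemma f_t_v_t_cauchy_measure_iff:
  assumes t: "t > 0"
  shows "f_t cauchy_measure t x = u \<and> v_t cauchy_measure t x = w
    \<longleftrightarrow> w > 0 \<and> w * (1 + w) * (u\<^sup>2 + 1) = t \<and> x = u * (1 + w)"
proof -
  have level: "cauchy_poisson_reciprocal (u * (1 + w)) w = w * (1 + w) * (u\<^sup>2 + 1)" if "w > 0"
    using that by (simp add: cauchy_poisson_reciprocal_def field_simps power2_eq_square)
  show ?thesis
  proof
    assume "f_t cauchy_measure t x = u \<and> v_t cauchy_measure t x = w"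
    then have "x = u * (1 + w)" "w > 0" "cauchy_poisson_reciprocal x w = t"
      using f_t_cauchy_measure[OF t, of x] v_t_cauchy_measure_iff[OF t, of x w]
      by (auto simp: field_simps)
    then show "w > 0 \<and> w * (1 + w) * (u\<^sup>2 + 1) = t \<and> x = u * (1 + w)"
      using level by simp
  next
    assume "w > 0 \<and> w * (1 + w) * (u\<^sup>2 + 1) = t \<and> x = u * (1 + w)"
    then have "v_t cauchy_measure t x = w" "x = u * (1 + w)" "w > 0"
      using v_t_cauchy_measure_iff[OF t] level by auto
    then show "f_t cauchy_measure t x = u \<and> v_t cauchy_measure t x = w"
      using f_t_cauchy_measure[OF t, of x] by simp
  qed
qed

lemma positive_root_quadratic:
  fixes s t w :: real
  assumes s: "s > 0" and t: "t \<ge> 0" and w: "w \<ge> 0"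
  shows "w * (1 + w) * s = t \<longleftrightarrow> 2 * w = 4 * t / (sqrt s * (sqrt s + sqrt (s + 4 * t)))"
proof -
  have "((2 * w + 1) * sqrt s)\<^sup>2 - (sqrt (s + 4 * t))\<^sup>2 = 4 * (w * (1 + w) * s - t)"
    using s t by (simp add: algebra_simps power2_eq_square)
  then have "w * (1 + w) * s = t \<longleftrightarrow> ((2 * w + 1) * sqrt s)\<^sup>2 = (sqrt (s + 4 * t))\<^sup>2"
    unfolding eq_iff_diff_eq_0[of "w * (1 + w) * s"] eq_iff_diff_eq_0[of "((2 * w + 1) * sqrt s)\<^sup>2"]
    by simp
  also have "\<dots> \<longleftrightarrow> (2 * w + 1) * sqrt s = sqrt (s + 4 * t)"
    using s t w by (intro power2_eq_iff_nonneg) auto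
  also have "\<dots> \<longleftrightarrow> 2 * w = (sqrt (s + 4 * t) - sqrt s) / sqrt s"
    using s by (auto simp: field_simps)
  also have "(sqrt (s + 4 * t) - sqrt s) / sqrt s = 4 * t / (sqrt s * (sqrt s + sqrt (s + 4 * t)))"
  proof -
    have "(sqrt (s + 4 * t) - sqrt s) * (sqrt s + sqrt (s + 4 * t)) = 4 * t"
      using s t by (simp add: algebra_simps)
    moreover have "sqrt s + sqrt (s + 4 * t) > 0"
      using s t by (simp add: add_pos_nonneg)
    ultimately show ?thesis
      by (metis mult_divide_mult_cancel_right less_irrefl)
  qed
  finally show ?thesis .
qed

theorem lemma6p10:
  fixes t u :: real
  assumes "t > 0"
  shows "phi_t cauchy_measure t u =
    4 * t / (sqrt (u\<^sup>2 + 1) * (sqrt (u\<^sup>2 + 1) + sqrt (u\<^sup>2 + 1 + 4 * t)))"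
proof -
  define s where "s = u\<^sup>2 + 1"
  have s: "s > 0"
    by (simp add: s_def add_nonneg_pos)
  define w\<^sub>0 where "w\<^sub>0 = 2 * t / (sqrt s * (sqrt s + sqrt (s + 4 * t)))"
  have "w\<^sub>0 > 0"
    using s assms by (simp add: w\<^sub>0_def add_pos_nonneg)
  moreover from this have "w\<^sub>0 * (1 + w\<^sub>0) * s = t"
    using positive_root_quadratic[OF s, of t w\<^sub>0] assms by (simp add: w\<^sub>0_def)
  ultimately have "f_t cauchy_measure t (u * (1 + w\<^sub>0)) = u"
    using f_t_v_t_cauchy_measure_iff[OF assms, of "u * (1 + w\<^sub>0)" u w\<^sub>0] by (simp add: s_def)
  then have "u \<in> range (f_t cauchy_measure t)"
    by (metis rangeI)
  define w where "w = v_t cauchy_measure t (inv (f_t cauchy_measure t) u)"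
  \<comment> \<open>\<open>inv\<close> is a choice operator: it yields a preimage only because \<open>u\<close> is in the range\<close>
  have "f_t cauchy_measure t (inv (f_t cauchy_measure t) u) = u"
    using \<open>u \<in> range (f_t cauchy_measure t)\<close> by (rule f_inv_into_f)
  then have "w > 0" "w * (1 + w) * s = t"
    using f_t_v_t_cauchy_measure_iff[OF assms, of "inv (f_t cauchy_measure t) u" u w]
    by (simp_all add: w_def s_def)
  then have "2 * w = 4 * t / (sqrt s * (sqrt s + sqrt (s + 4 * t)))"
    using positive_root_quadratic[OF s] assms by simp
  then show ?thesis
    by (simp add: phi_t_def w_def s_def)
qed

end
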